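(* Let $\langle X,\mathcal{M},O\rangle$ be a measurement scenario in which $\mathcal{M}$ is a measurement cover of $X$, let $R$ be a commutative semiring, and let $e=\{e_C\}_{C\in\mathcal{M}}$ be a no-signaling empirical model for $\mathcal{M}$ with values in $\mathcal{D}_R$. The following are equivalent: (a) $e$ has a global distribution, i.e. there exists $d\in\mathcal{D}_R\mathcal{E}(X)$ with $d|_C=e_C$ for every $C\in\mathcal{M}$; (b) $e$ is realized by a factorisable hidden-variable model.
   Context: A measurement scenario $\langle X,\mathcal{M},O\rangle$ consists of a finite set $X$ of measurements, a family $\mathcal{M}$ of subsets of $X$ (contexts), and a finite set $O$ of outcomes. $\mathcal{M}$ is a measurement cover if $\bigcup_{C\in\mathcal{M}}C=X$ and $\mathcal{M}$ is an antichain ($C\subseteq C'$ in $\mathcal{M}$ implies $C=C'$). The event sheaf assigns to $U\subseteq X$ the set $\mathcal{E}(U)=O^U$ of functions $s:U\to O$ (events), and for $U\subseteq U'$ the restriction $s\mapsto s|_U$. For a set $Y$, an $R$-distribution on $Y$ is a finitely supported function $d:Y\to R$ with $\sum_{y\in Y}d(y)=1$; $\mathcal{D}_R(Y)$ denotes the set of these. $\mathcal{D}_R\mathcal{E}(U):=\mathcal{D}_R(\mathcal{E}(U))$, and for $U\subseteq U'$ and $d\in\mathcal{D}_R\mathcal{E}(U')$ the marginal is $d|_U(s)=\sum_{s'\in\mathcal{E}(U'),\,s'|_U=s}d(s')$ for $s\in\mathcal{E}(U)$. For a single measurement $m$ write $d|_m$ for $d|_{\{m\}}$. A no-signaling empirical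 model for $\mathcal{M}$ is a family $\{e_C\}_{C\in\mathcal{M}}$ with $e_C\in\mathcal{D}_R\mathcal{E}(C)$ and $e_C|_{C\cap C'}=e_{C'}|_{C\cap C'}$ for all $C,C'\in\mathcal{M}$. A hidden-variable model $h$ over a set $\Lambda$ consists of $h_\Lambda\in\mathcal{D}_R(\Lambda)$ and, for each $\lambda\in\Lambda$ and $C\in\mathcal{M}$, $h^\lambda_C\in\mathcal{D}_R\mathcal{E}(C)$, such that $h^\lambda_C|_{C\cap C'}=h^\lambda_{C'}|_{C\cap C'}$ for all $\lambda$ and $C,C'\in\mathcal{M}$. It realizes $e$ if $e_C(s)=\sum_{\lambda\in\Lambda}h^\lambda_C(s)\,h_\Lambda(\lambda)$ for all $C\in\mathcal{M}$ and $s\in\mathcal{E}(C)$. It is factorisable if $h^\lambda_C(s)=\prod_{m\in C}h^\lambda_C|_m(s|_m)$ for all $\lambda$, all $C\in\mathcal{M}$ and all $s\in\mathcal{E}(C)$. *)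

theory Defs
  imports "HOL-Library.FuncSet"
begin

definition measurement_cover :: "'x set \<Rightarrow> 'x set set \<Rightarrow> bool" where
  "measurement_cover X M \<longleftrightarrow> finite X \<and> \<Union>M = X \<and>
     (\<forall>C\<in>M. \<forall>C'\<in>M. C \<subseteq> C' \<longrightarrow> C = C')"

definition events :: "'x set \<Rightarrow> 'o set \<Rightarrow> ('x \<Rightarrow> 'o) set" where
  "events U Os = PiE U (\<lambda>_. Os)"

definition is_distr :: "'a set \<Rightarrow> ('a \<Rightarrow> 'r::comm_semiring_1) \<Rightarrow> bool" where
  "is_distr Y d \<longleftrightarrow> finite {y. d y \<noteq> 0} \<and> {y. d y \<noteq> 0} \<subseteq> Y \<and>
     sum d {y. d y \<noteq> 0} = 1"

definition marg :: "'o set \<Rightarrow> 'x set \<Rightarrow> 'x set \<Rightarrow> (('x \<Rightarrow> 'o) \<Rightarrow> 'r::comm_semiring_1)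
     \<Rightarrow> ('x \<Rightarrow> 'o) \<Rightarrow> 'r" where
  "marg Os U' U d s = (\<Sum>s'\<in>{s'\<in>events U' Os. restrict s' U = s}. d s')"

definition empirical_model ::
  "'o set \<Rightarrow> 'x set set \<Rightarrow> ('x set \<Rightarrow> ('x \<Rightarrow> 'o) \<Rightarrow> 'r::comm_semiring_1) \<Rightarrow> bool" where
  "empirical_model Os M e \<longleftrightarrow>
     (\<forall>C\<in>M. is_distr (events C Os) (e C)) \<and>
     (\<forall>C\<in>M. \<forall>C'\<in>M. \<forall>s\<in>events (C \<inter> C') Os.
        marg Os C (C \<inter> C') (e C) s = marg Os C' (C \<inter> C') (e C') s)"

definition has_global_distr ::
  "'o set \<Rightarrow> 'x set \<Rightarrow> 'x set set \<Rightarrow> ('x set \<Rightarrow> ('x \<Rightarrow> 'o) \<Rightarrow> 'r::comm_semiring_1) \<Rightarrow> bool" where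
  "has_global_distr Os X M e \<longleftrightarrow>
     (\<exists>d. is_distr (events X Os) d \<and>
          (\<forall>C\<in>M. \<forall>s\<in>events C Os. marg Os X C d s = e C s))"

definition hv_model ::
  "'o set \<Rightarrow> 'x set set \<Rightarrow> 'l set \<Rightarrow> ('l \<Rightarrow> 'r::comm_semiring_1)
     \<Rightarrow> ('l \<Rightarrow> 'x set \<Rightarrow> ('x \<Rightarrow> 'o) \<Rightarrow> 'r) \<Rightarrow> bool" where
  "hv_model Os M L hL h \<longleftrightarrow>
     is_distr L hL \<and>
     (\<forall>l\<in>L. \<forall>C\<in>M. is_distr (events C Os) (h l C)) \<and>
     (\<forall>l\<in>L. \<forall>C\<in>M. \<forall>C'\<in>M. \<forall>s\<in>events (C \<inter> C') Os.
        marg Os C (C \<inter> C') (h l C) s = marg Os C' (C \<inter> C') (h l C') s)"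

text \<open>Realization: the sum over L is taken over the (finite) support of hL.\<close>
definition realizes ::
  "'o set \<Rightarrow> 'x set set \<Rightarrow> 'l set \<Rightarrow> ('l \<Rightarrow> 'r::comm_semiring_1)
     \<Rightarrow> ('l \<Rightarrow> 'x set \<Rightarrow> ('x \<Rightarrow> 'o) \<Rightarrow> 'r) \<Rightarrow> ('x set \<Rightarrow> ('x \<Rightarrow> 'o) \<Rightarrow> 'r) \<Rightarrow> bool" where
  "realizes Os M L hL h e \<longleftrightarrow>
     (\<forall>C\<in>M. \<forall>s\<in>events C Os.
        e C s = (\<Sum>l\<in>{l\<in>L. hL l \<noteq> 0}. h l C s * hL l))"

definition factorisable ::
  "'o set \<Rightarrow> 'x set set \<Rightarrow> 'l set \<Rightarrow> ('l \<Rightarrow> 'x set \<Rightarrow> ('x \<Rightarrow> 'o) \<Rightarrow> 'r::comm_semiring_1) \<Rightarrow> bool" where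
  "factorisable Os M L h \<longleftrightarrow>
     (\<forall>l\<in>L. \<forall>C\<in>M. \<forall>s\<in>events C Os.
        h l C s = (\<Prod>m\<in>C. marg Os C {m} (h l C) (restrict s {m})))"

end

theory Submission
  imports Defs
begin

text \<open>Given a global distribution \<open>d\<close>, the global events themselves serve as hidden variables,
  weighted by \<open>d\<close>: each one fixes the outcome of every measurement, so its context distributions
  are point masses, and these factorise trivially. Conversely, no-signalling of a hidden-variable
  model \<open>h\<^sup>\<lambda>\<close> makes its single-measurement marginal at \<open>m\<close> independent of the context containing
  \<open>m\<close>, so factorisability writes \<open>h\<^sup>\<lambda>\<^sub>C\<close> as a product of these marginals. The mixture over
  \<open>\<lambda>\<close> of the corresponding product distributions on all of \<open>X\<close> is then a global distribution:
  its marginal on \<open>C\<close> is \<open>e\<^sub>C\<close>, because the factors outside \<open>C\<close> sum to 1.\<close>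

lemma finite_events: "finite U \<Longrightarrow> finite Os \<Longrightarrow> finite (events U Os)"
  unfolding events_def by (intro finite_PiE) auto

lemma restrict_events: "s \<in> events U Os \<Longrightarrow> V \<subseteq> U \<Longrightarrow> restrict s V \<in> events V Os"
  by (auto simp: events_def PiE_iff)

lemma is_distr_sum_eq_1:
  assumes "is_distr Y d" "finite Y"
  shows "sum d Y = 1"
proof -
  have "sum d Y = sum d {y. d y \<noteq> 0}"
    using assms by (intro sum.mono_neutral_right) (auto simp: is_distr_def)
  then show ?thesis using assms by (simp add: is_distr_def)
qed

lemma is_distrI:
  assumes "finite Y" "{y. d y \<noteq> 0} \<subseteq> Y" "sum d Y = 1"
  shows "is_distr Y d"
proof -
  have "sum d {y. d y \<noteq> 0} = sum d Y"
    using assms by (intro sum.mono_neutral_left) auto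
  moreover have "finite {y. d y \<noteq> 0}" using assms(1,2) by (rule finite_subset[rotated])
  ultimately show ?thesis using assms(2,3) by (simp add: is_distr_def)
qed

lemma marg_marg:
  assumes "W \<subseteq> V" "V \<subseteq> U" "finite U" "finite Os"
  shows "marg Os V W (marg Os U V d) s = marg Os U W d s"
proof -
  let ?S = "{s'\<in>events U Os. restrict s' W = s}"
  let ?T = "{t\<in>events V Os. restrict t W = s}"
  have "marg Os V W (marg Os U V d) s = (\<Sum>t\<in>?T. sum d {s'\<in>?S. restrict s' V = t})"
    unfolding marg_def
  proof (intro sum.cong refl arg_cong2[where f=sum])
    fix t assume "t \<in> ?T"
    then show "{s'\<in>events U Os. restrict s' V = t} = {s'\<in>?S. restrict s' V = t}"
      using assms(1) by (auto simp: Int_absorb1)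
  qed
  also have "\<dots> = sum d ?S"
  proof (rule sum.group)
    have "finite V" using assms(2,3) finite_subset by blast
    then show "finite ?S" "finite ?T"
      using finite_events[OF assms(3,4)] finite_events[OF \<open>finite V\<close> assms(4)] by simp_all
    show "(\<lambda>s'. restrict s' V) ` ?S \<subseteq> ?T"
    proof (rule image_subsetI)
      fix s' assume "s' \<in> ?S"
      then show "restrict s' V \<in> ?T"
        using assms(1,2) restrict_events[of s' U Os V] by (simp add: Int_absorb1)
    qed
  qed
  finally show ?thesis unfolding marg_def .
qed

lemma marg_empty: "marg Os U {} d (\<lambda>_. undefined) = sum d (events U Os)"
  by (simp add: marg_def restrict_def)

lemma marg_cong:
  assumes "\<And>s'. s' \<in> events U Os \<Longrightarrow> d s' = d' s'"
  shows "marg Os U V d s = marg Os U V d' s"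
  unfolding marg_def using assms by (intro sum.cong) auto

lemma marg_sum_mult:
  "marg Os U V (\<lambda>s'. \<Sum>l\<in>L. w l * p l s') s = (\<Sum>l\<in>L. w l * marg Os U V (p l) s)"
  unfolding marg_def by (subst sum.swap) (simp add: sum_distrib_left)

lemma events_filter_eq_PiE:
  assumes "C \<subseteq> X" "s \<in> events C Os"
  shows "{s'\<in>events X Os. restrict s' C = s} = PiE X (\<lambda>m. if m \<in> C then {s m} else Os)"
proof (intro set_eqI iffI)
  fix s' assume "s' \<in> {s'\<in>events X Os. restrict s' C = s}"
  then show "s' \<in> PiE X (\<lambda>m. if m \<in> C then {s m} else Os)"
    using assms(1) by (auto simp: events_def PiE_iff restrict_def fun_eq_iff split: if_splits)
next
  fix s' assume s': "s' \<in> PiE X (\<lambda>m. if m \<in> C then {s m} else Os)"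
  have "s' \<in> events X Os"
    using s' assms(2) by (auto simp: events_def PiE_iff split: if_splits)
  moreover have "restrict s' C = s"
  proof
    fix x show "restrict s' C x = s x"
    proof (cases "x \<in> C")
      case True
      then have "s' x \<in> (if x \<in> C then {s x} else Os)"
        using PiE_mem[OF s'] assms(1) True by blast
      then show ?thesis using True by simp
    qed (use assms(2) in \<open>auto simp: events_def PiE_iff extensional_def\<close>)
  qed
  ultimately show "s' \<in> {s'\<in>events X Os. restrict s' C = s}" by simp
qed

lemma marg_product:
  fixes q :: "'x \<Rightarrow> 'o \<Rightarrow> 'r::comm_semiring_1"
  assumes "finite X" "finite Os" "C \<subseteq> X" "s \<in> events C Os"
    and "\<And>m. m \<in> X - C \<Longrightarrow> (\<Sum>z\<in>Os. q m z) = 1"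
  shows "marg Os X C (\<lambda>s'. \<Prod>m\<in>X. q m (s' m)) s = (\<Prod>m\<in>C. q m (s m))"
proof -
  define B where "B m = (if m \<in> C then {s m} else Os)" for m
  have "marg Os X C (\<lambda>s'. \<Prod>m\<in>X. q m (s' m)) s = (\<Sum>s'\<in>PiE X B. \<Prod>m\<in>X. q m (s' m))"
    unfolding marg_def B_def events_filter_eq_PiE[OF assms(3,4)] ..
  also have "\<dots> = (\<Prod>m\<in>X. \<Sum>z\<in>B m. q m z)"
    by (rule prod_sum_PiE[symmetric]) (use assms(1,2) in \<open>auto simp: B_def\<close>)
  also have "\<dots> = (\<Prod>m\<in>C. \<Sum>z\<in>B m. q m z) * (\<Prod>m\<in>X - C. \<Sum>z\<in>B m. q m z)"
    using assms(1,3) by (metis Diff_partition finite_Un prod.union_disjoint Diff_disjoint)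
  also have "\<dots> = (\<Prod>m\<in>C. q m (s m))"
    using assms(5) by (simp add: B_def)
  finally show ?thesis .
qed

lemma marg_mixture_product:
  fixes q :: "'l \<Rightarrow> 'x \<Rightarrow> 'o \<Rightarrow> 'r::comm_semiring_1"
  assumes "finite X" "finite Os" "C \<subseteq> X" "s \<in> events C Os"
    and "\<And>l m. l \<in> L \<Longrightarrow> m \<in> X - C \<Longrightarrow> (\<Sum>z\<in>Os. q l m z) = 1"
  shows "marg Os X C (\<lambda>s'. \<Sum>l\<in>L. w l * (\<Prod>m\<in>X. q l m (s' m))) s
    = (\<Sum>l\<in>L. w l * (\<Prod>m\<in>C. q l m (s m)))"
  unfolding marg_sum_mult using assms by (intro sum.cong refl arg_cong2[where f="(*)"] marg_product)

lemma sum_marg_singleton: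
  assumes "m \<in> U" "finite U" "finite Os" "is_distr (events U Os) d"
  shows "(\<Sum>z\<in>Os. marg Os U {m} d (restrict (\<lambda>_. z) {m})) = 1"
proof -
  have "(\<Sum>z\<in>Os. marg Os U {m} d (restrict (\<lambda>_. z) {m}))
      = (\<Sum>z\<in>Os. sum d {s'\<in>events U Os. s' m = z})"
    unfolding marg_def
  proof (intro sum.cong refl arg_cong2[where f=sum])
    fix z
    show "{s'\<in>events U Os. restrict s' {m} = restrict (\<lambda>_. z) {m}} = {s'\<in>events U Os. s' m = z}"
      by (auto simp: restrict_def fun_eq_iff)
  qed
  also have "\<dots> = (\<Sum>s'\<in>events U Os. sum (\<lambda>z. d s') {z\<in>Os. s' m = z})"
    by (rule sum.swap_restrict[OF assms(3) finite_events[OF assms(2,3)]])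
  also have "\<dots> = (\<Sum>s'\<in>events U Os. d s')"
  proof (rule sum.cong[OF refl])
    fix s' assume "s' \<in> events U Os"
    then have "{z\<in>Os. s' m = z} = {s' m}" using assms(1) by (auto simp: events_def)
    then show "sum (\<lambda>z. d s') {z\<in>Os. s' m = z} = d s'" by simp
  qed
  also have "\<dots> = 1" using is_distr_sum_eq_1[OF assms(4) finite_events[OF assms(2,3)]] .
  finally show ?thesis .
qed

definition no_signalling ::
    "'o set \<Rightarrow> 'x set set \<Rightarrow> ('x set \<Rightarrow> ('x \<Rightarrow> 'o) \<Rightarrow> 'r::comm_semiring_1) \<Rightarrow> bool"
  where "no_signalling Os M p \<longleftrightarrow> (\<forall>C\<in>M. \<forall>C'\<in>M. \<forall>s\<in>events (C \<inter> C') Os.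
     marg Os C (C \<inter> C') (p C) s = marg Os C' (C \<inter> C') (p C') s)"

lemma hv_model_iff_no_signalling:
  "hv_model Os M L hL h \<longleftrightarrow> is_distr L hL \<and>
     (\<forall>l\<in>L. \<forall>C\<in>M. is_distr (events C Os) (h l C)) \<and> (\<forall>l\<in>L. no_signalling Os M (h l))"
  by (simp add: hv_model_def no_signalling_def)

definition site_marg ::
    "'o set \<Rightarrow> 'x set set \<Rightarrow> ('x set \<Rightarrow> ('x \<Rightarrow> 'o) \<Rightarrow> 'r::comm_semiring_1)
     \<Rightarrow> 'x \<Rightarrow> 'o \<Rightarrow> 'r"
  where "site_marg Os M p m z =
    (let C = SOME C. C \<in> M \<and> m \<in> C in marg Os C {m} (p C) (restrict (\<lambda>_. z) {m}))"

lemma some_context: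
  assumes "m \<in> \<Union>M"
  shows "(SOME C. C \<in> M \<and> m \<in> C) \<in> M" "m \<in> (SOME C. C \<in> M \<and> m \<in> C)"
  using someI_ex[of "\<lambda>C. C \<in> M \<and> m \<in> C"] assms by auto

lemma marg_singleton_eq_site_marg:
  assumes ns: "no_signalling Os M p" and fin: "finite (\<Union>M)" "finite Os"
    and C: "C \<in> M" "m \<in> C"
  shows "marg Os C {m} (p C) (restrict s {m}) = site_marg Os M p m (s m)"
proof -
  define C' where "C' = (SOME C. C \<in> M \<and> m \<in> C)"
  have "m \<in> \<Union>M" using C by blast
  then have C': "C' \<in> M" "m \<in> C'" unfolding C'_def by (rule some_context)+
  have finC: "finite C" "finite C'"
    using finite_subset[OF Union_upper fin(1)] C(1) C'(1) by auto
  have "marg Os C {m} (p C) (restrict s {m})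
      = marg Os (C \<inter> C') {m} (marg Os C (C \<inter> C') (p C)) (restrict s {m})"
    by (rule marg_marg[symmetric]) (use C C' finC fin in auto)
  also have "\<dots> = marg Os (C \<inter> C') {m} (marg Os C' (C \<inter> C') (p C')) (restrict s {m})"
    using ns C(1) C'(1) unfolding no_signalling_def by (intro marg_cong) blast
  also have "\<dots> = marg Os C' {m} (p C') (restrict s {m})"
    by (rule marg_marg) (use C C' finC fin in auto)
  moreover have "restrict (\<lambda>_. s m) {m} = restrict s {m}"
    by (auto simp: restrict_def)
  ultimately show ?thesis unfolding site_marg_def C'_def Let_def by simp
qed

lemma sum_site_marg:
  assumes "\<And>C. C \<in> M \<Longrightarrow> is_distr (events C Os) (p C)"
    and "finite (\<Union>M)" "finite Os" "m \<in> \<Union>M"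
  shows "(\<Sum>z\<in>Os. site_marg Os M p m z) = 1"
  unfolding site_marg_def Let_def
  using some_context[OF assms(4)] assms(1-3)
  by (intro sum_marg_singleton) (auto intro: finite_subset)

lemma factorisable_eq_prod_site_marg:
  assumes "hv_model Os M L hL h" "factorisable Os M L h" "finite (\<Union>M)" "finite Os"
    and "l \<in> L" "C \<in> M" "s \<in> events C Os"
  shows "h l C s = (\<Prod>m\<in>C. site_marg Os M (h l) m (s m))"
proof -
  have "no_signalling Os M (h l)"
    using assms(1,5) by (simp add: hv_model_iff_no_signalling)
  then have "marg Os C {m} (h l C) (restrict s {m}) = site_marg Os M (h l) m (s m)" if "m \<in> C" for m
    using assms(3,4,6) that by (rule marg_singleton_eq_site_marg)
  then show ?thesis
    using assms(2,5-7) by (simp add: factorisable_def)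
qed

lemma is_distr_support_eq: "is_distr L hL \<Longrightarrow> {l\<in>L. hL l \<noteq> 0} = {l. hL l \<noteq> 0}"
  by (auto simp: is_distr_def)

lemma factorisable_realization_imp_global_distr:
  assumes cover: "measurement_cover X M" and fin: "finite Os"
    and hv: "hv_model Os M L hL h" and fac: "factorisable Os M L h"
    and rea: "realizes Os M L hL h e"
  shows "has_global_distr Os X M e"
proof -
  have finX: "finite X" and UM: "\<Union>M = X" using cover by (auto simp: measurement_cover_def)
  define L0 where "L0 = {l\<in>L. hL l \<noteq> 0}"
  have L0: "finite L0" "sum hL L0 = 1" "L0 \<subseteq> L"
    using hv is_distr_support_eq[of L hL] by (auto simp: L0_def hv_model_def is_distr_def)
  define q where "q l = site_marg Os M (h l)" for l
  define d where "d s = (if s \<in> events X Os then \<Sum>l\<in>L0. hL l * (\<Prod>m\<in>X. q l m (s m)) else 0)"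
    for s
  have marg_d: "marg Os X C d s = (\<Sum>l\<in>L0. hL l * (\<Prod>m\<in>C. q l m (s m)))"
    if "C \<subseteq> X" "s \<in> events C Os" for C s
  proof -
    have "(\<Sum>z\<in>Os. q l m z) = 1" if "l \<in> L0" "m \<in> X" for l m
      unfolding q_def using hv L0(3) UM finX fin that
      by (intro sum_site_marg) (auto simp: hv_model_def)
    then show ?thesis
      unfolding d_def using finX fin that by (subst marg_cong) (auto intro: marg_mixture_product)
  qed
  show ?thesis unfolding has_global_distr_def
  proof (intro exI conjI ballI)
    have "sum d (events X Os) = marg Os X {} d (\<lambda>_. undefined)"
      by (rule marg_empty[symmetric])
    also have "\<dots> = 1"
      using marg_d[of "{}" "\<lambda>_. undefined"] L0(2) by (simp add: events_def)
    finally show "is_distr (events X Os) d"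
      using finite_events[OF finX fin] by (intro is_distrI) (auto simp: d_def)
  next
    fix C s assume C: "C \<in> M" and s: "s \<in> events C Os"
    have "marg Os X C d s = (\<Sum>l\<in>L0. hL l * (\<Prod>m\<in>C. q l m (s m)))"
      using C s UM by (intro marg_d) auto
    also have "\<dots> = (\<Sum>l\<in>L0. h l C s * hL l)"
    proof (rule sum.cong[OF refl])
      fix l assume "l \<in> L0"
      then have "h l C s = (\<Prod>m\<in>C. q l m (s m))"
        unfolding q_def using L0(3) UM finX by (intro factorisable_eq_prod_site_marg[OF hv fac _ fin _ C s]) auto
      then show "hL l * (\<Prod>m\<in>C. q l m (s m)) = h l C s * hL l" by (simp add: mult.commute)
    qed
    also have "\<dots> = e C s"
      using rea C s by (simp add: realizes_def L0_def)
    finally show "marg Os X C d s = e C s" .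
  qed
qed

definition point_distr :: "'a \<Rightarrow> 'a \<Rightarrow> 'r::comm_semiring_1" where
  "point_distr g t = (if t = g then 1 else 0)"

lemma is_distr_point_distr: "g \<in> Y \<Longrightarrow> finite Y \<Longrightarrow> is_distr Y (point_distr g)"
  by (rule is_distrI) (auto simp: point_distr_def)

lemma marg_point_distr:
  assumes "V \<subseteq> U" "g \<in> events U Os" "finite U" "finite Os"
  shows "marg Os U V (point_distr g) s = point_distr (restrict g V) s"
proof -
  have "marg Os U V (point_distr g) s = (if g \<in> {t\<in>events U Os. restrict t V = s} then 1 else 0)"
    unfolding marg_def point_distr_def
    using finite_events[OF assms(3,4)] by (intro sum.delta) simp
  then show ?thesis using assms(2) by (auto simp: point_distr_def)
qed

lemma prod_point_distr_restrict:
  assumes "g \<in> events C Os" "s \<in> events C Os" "finite C"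
  shows "(\<Prod>m\<in>C. point_distr (restrict g {m}) (restrict s {m})) = (point_distr g s :: 'r::comm_semiring_1)"
proof (cases "g = s")
  case True
  then show ?thesis by (simp add: point_distr_def)
next
  case False
  then obtain m where "m \<in> C" "g m \<noteq> s m"
    using assms(1,2) PiE_ext[of g C "\<lambda>_. Os" s] unfolding events_def by blast
  moreover have "restrict s {m} \<noteq> restrict g {m}"
    using \<open>g m \<noteq> s m\<close> by (auto simp: fun_eq_iff)
  ultimately have "(\<Prod>m\<in>C. point_distr (restrict g {m}) (restrict s {m})) = (0::'r)"
    using assms(3) by (intro prod_zero) (auto simp: point_distr_def)
  then show ?thesis using False by (simp add: point_distr_def)
qed

lemma point_distr_eq_prod_marg:
  assumes "g \<in> events C Os" "s \<in> events C Os" "finite C" "finite Os"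
  shows "point_distr g s = (\<Prod>m\<in>C. marg Os C {m} (point_distr g) (restrict s {m}))"
proof -
  have "point_distr g s = (\<Prod>m\<in>C. point_distr (restrict g {m}) (restrict s {m}))"
    by (rule prod_point_distr_restrict[OF assms(1-3), symmetric])
  also have "\<dots> = (\<Prod>m\<in>C. marg Os C {m} (point_distr g) (restrict s {m}))"
    using assms by (intro prod.cong refl marg_point_distr[symmetric]) auto
  finally show ?thesis .
qed

lemma marg_eq_mixture_point_distr:
  assumes "finite U" "finite Os"
  shows "marg Os U V d s = (\<Sum>g\<in>{g\<in>events U Os. d g \<noteq> 0}. point_distr (restrict g V) s * d g)"
proof -
  have "(\<Sum>g\<in>{g\<in>events U Os. d g \<noteq> 0}. point_distr (restrict g V) s * d g)
      = (\<Sum>g\<in>events U Os. point_distr (restrict g V) s * d g)"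
    using finite_events[OF assms] by (intro sum.mono_neutral_left) auto
  also have "\<dots> = (\<Sum>g\<in>events U Os. if restrict g V = s then d g else 0)"
    by (intro sum.cong) (auto simp: point_distr_def)
  also have "\<dots> = marg Os U V d s"
    using finite_events[OF assms] by (simp add: marg_def sum.inter_filter)
  finally show ?thesis ..
qed

lemma global_distr_imp_deterministic_realization:
  assumes cover: "measurement_cover X M" and fin: "finite Os"
    and d: "is_distr (events X Os) d"
    and marg_d: "\<And>C s. C \<in> M \<Longrightarrow> s \<in> events C Os \<Longrightarrow> marg Os X C d s = e C s"
  defines "h \<equiv> \<lambda>g C. point_distr (restrict g C)"
  shows "hv_model Os M (events X Os) d h \<and> factorisable Os M (events X Os) h
    \<and> realizes Os M (events X Os) d h e"
proof (intro conjI)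
  have finX: "finite X" and CX: "\<And>C. C \<in> M \<Longrightarrow> C \<subseteq> X"
    using cover by (auto simp: measurement_cover_def)
  have finC: "finite C" if "C \<in> M" for C using finite_subset[OF CX[OF that] finX] .
  have gC: "restrict g C \<in> events C Os" if "g \<in> events X Os" "C \<in> M" for g C
    using restrict_events that CX by blast
  have marg_h: "marg Os C V (h g C) s = point_distr (restrict g V) s"
    if "g \<in> events X Os" "C \<in> M" "V \<subseteq> C" for g C V s
    using marg_point_distr[OF that(3) gC[OF that(1,2)] finC[OF that(2)] fin] that(3)
    by (simp add: h_def Int_absorb1)
  show "hv_model Os M (events X Os) d h"
    unfolding hv_model_iff_no_signalling no_signalling_def
    using d gC finite_events[OF finC fin] marg_h by (auto simp: h_def is_distr_point_distr Int_commute)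
  show "factorisable Os M (events X Os) h"
    unfolding factorisable_def h_def
  proof (intro ballI)
    fix g C s assume "g \<in> events X Os" "C \<in> M" "s \<in> events C Os"
    then show "point_distr (restrict g C) s
        = (\<Prod>m\<in>C. marg Os C {m} (point_distr (restrict g C)) (restrict s {m}))"
      by (intro point_distr_eq_prod_marg gC finC fin)
  qed
  show "realizes Os M (events X Os) d h e"
    unfolding realizes_def h_def
  proof (intro ballI)
    fix C s assume "C \<in> M" "s \<in> events C Os"
    then show "e C s = (\<Sum>g\<in>{g\<in>events X Os. d g \<noteq> 0}. point_distr (restrict g C) s * d g)"
      using marg_d marg_eq_mixture_point_distr[OF finX fin, of C d s] by simp
  qed
qed

lemma bij_betw_Collect:
  "bij_betw f A B \<Longrightarrow> bij_betw f {a\<in>A. P (f a)} {b\<in>B. P b}"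
  by (auto simp: bij_betw_def inj_on_def image_iff)

lemma factorisable_realization_reindex:
  assumes f: "bij_betw f L' L"
    and "hv_model Os M L hL h" "factorisable Os M L h" "realizes Os M L hL h e"
  defines "hL' \<equiv> \<lambda>l. if l \<in> L' then hL (f l) else 0"
  shows "hv_model Os M L' hL' (\<lambda>l. h (f l)) \<and> factorisable Os M L' (\<lambda>l. h (f l))
    \<and> realizes Os M L' hL' (\<lambda>l. h (f l)) e"
proof -
  have supp: "{l\<in>L'. hL' l \<noteq> 0} = {l\<in>L'. hL (f l) \<noteq> 0}"
      "{l. hL' l \<noteq> 0} = {l\<in>L'. hL (f l) \<noteq> 0}"
    by (auto simp: hL'_def)
  have bij: "bij_betw f {l\<in>L'. hL (f l) \<noteq> 0} {x\<in>L. hL x \<noteq> 0}"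
    using bij_betw_Collect[OF f] .
  have hL: "is_distr L hL" using assms(2) by (simp add: hv_model_def)
  have "finite {l\<in>L'. hL (f l) \<noteq> 0}"
    using bij bij_betw_finite hL is_distr_support_eq[OF hL] by (auto simp: is_distr_def)
  moreover have "sum hL' {l\<in>L'. hL (f l) \<noteq> 0} = 1"
    using sum.reindex_bij_betw[OF bij, of hL] hL is_distr_support_eq[OF hL]
    by (simp add: hL'_def is_distr_def)
  ultimately have "is_distr L' hL'"
    using supp by (auto simp: is_distr_def)
  moreover have fL: "f l \<in> L" if "l \<in> L'" for l
    using f that by (auto simp: bij_betw_def)
  moreover have "realizes Os M L' hL' (\<lambda>l. h (f l)) e"
    unfolding realizes_def
  proof (intro ballI)
    fix C s assume "C \<in> M" "s \<in> events C Os"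
    then have "e C s = (\<Sum>x\<in>{x\<in>L. hL x \<noteq> 0}. h x C s * hL x)"
      using assms(4) by (simp add: realizes_def)
    also have "\<dots> = (\<Sum>l\<in>{l\<in>L'. hL (f l) \<noteq> 0}. h (f l) C s * hL (f l))"
      by (rule sum.reindex_bij_betw[OF bij, symmetric])
    also have "\<dots> = (\<Sum>l\<in>{l\<in>L'. hL' l \<noteq> 0}. h (f l) C s * hL' l)"
      unfolding supp(1) by (intro sum.cong) (auto simp: hL'_def)
    finally show "e C s = (\<Sum>l\<in>{l\<in>L'. hL' l \<noteq> 0}. h (f l) C s * hL' l)" .
  qed
  ultimately show ?thesis
    using assms(2,3) by (auto simp: hv_model_iff_no_signalling factorisable_def)
qed

lemma global_distr_imp_factorisable_realization:
  assumes cover: "measurement_cover X M" and fin: "finite Os"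
    and global: "has_global_distr Os X M e"
  shows "\<exists>(L::nat set) hL h. hv_model Os M L hL h \<and> factorisable Os M L h \<and>
    realizes Os M L hL h e"
proof -
  obtain d where "is_distr (events X Os) d"
    and "\<And>C s. C \<in> M \<Longrightarrow> s \<in> events C Os \<Longrightarrow> marg Os X C d s = e C s"
    using global by (auto simp: has_global_distr_def)
  from global_distr_imp_deterministic_realization[OF cover fin this]
  obtain h where "hv_model Os M (events X Os) d h" "factorisable Os M (events X Os) h"
      "realizes Os M (events X Os) d h e"
    by blast
  moreover have "finite (events X Os)"
    using cover fin by (intro finite_events) (auto simp: measurement_cover_def)
  then obtain f where "bij_betw f {0..<card (events X Os)} (events X Os)"
    using ex_bij_betw_nat_finite by blast
  ultimately show ?thesis
    using factorisable_realization_reindex by blast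
qed

theorem theorem1:
  fixes X :: "'x set" and M :: "'x set set" and Os :: "'o set"
    and e :: "'x set \<Rightarrow> ('x \<Rightarrow> 'o) \<Rightarrow> 'r::comm_semiring_1"
  assumes "measurement_cover X M" and "finite Os"
    and "empirical_model Os M e"
  shows "(has_global_distr Os X M e \<longleftrightarrow>
            (\<exists>(L::nat set) hL h. hv_model Os M L hL h \<and> factorisable Os M L h \<and>
                realizes Os M L hL h e))
       \<and> (\<forall>(L::'l set) hL h. hv_model Os M L hL h \<and> factorisable Os M L h \<and>
                realizes Os M L hL h e \<longrightarrow> has_global_distr Os X M e)"
proof (intro conjI iffI allI impI)
  show "\<exists>(L::nat set) hL h. hv_model Os M L hL h \<and> factorisable Os M L h \<and>
      realizes Os M L hL h e" if "has_global_distr Os X M e"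
    using global_distr_imp_factorisable_realization[OF assms(1,2) that] .
  show "has_global_distr Os X M e" if "\<exists>(L::nat set) hL h. hv_model Os M L hL h \<and>
      factorisable Os M L h \<and> realizes Os M L hL h e"
    using that factorisable_realization_imp_global_distr[OF assms(1,2)] by blast
  show "has_global_distr Os X M e" if "hv_model Os M L hL h \<and> factorisable Os M L h \<and>
      realizes Os M L hL h e" for L :: "'l set" and hL h
    using that factorisable_realization_imp_global_distr[OF assms(1,2)] by blast
qed

end
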